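(* For all integers $k\ge4$ and $n\ge1$, $$\chi''_c(G_{k,n})\le k+1+\frac{1}{2n}.$$
   Context: A half-edge has exactly one end vertex. Let $H_k$ be obtained from $K_{k,k}$ by deleting one vertex but keeping its $k$ incident edges as half-edges, and let $H'_k$ be obtained from $H_k$ by deleting $k-2$ of its half-edges. Let $B_1,\ldots,B_n$ be copies of $H'_k$ with half-edges $f_i,f'_i$ in $B_i$, and let $B_0$ be a single vertex $u$ with two half-edges $f_0,f'_{n+1}$. $G_{k,n}$ is obtained from the disjoint union of $B_0,\ldots,B_n$ by joining $f_i$ and $f'_{i+1}$ into an edge for each $0\le i\le n$. For integers $p\ge q\ge1$, a $(p,q)$-total colouring of a graph assigns colours in $\{0,\ldots,p-1\}$ to vertices and edges such that $q\le|c(a)-c(b)|\le p-q$ whenever $a,b$ are adjacent vertices, edges sharing an end, or an incident vertex–edge pair; $\chi''_c(G)=\inf\{p/q\mid G \text{ has a } (p,q)\text{-total colouring}\}$. *)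

theory Defs
  imports Complex_Main
begin

text \<open>Simple graphs are given by a vertex set V and an edge set E of 2-element subsets of V.\<close>

definition col_ok :: "nat \<Rightarrow> nat \<Rightarrow> nat \<Rightarrow> nat \<Rightarrow> bool" where
  "col_ok p q a b \<longleftrightarrow>
     int q \<le> \<bar>int a - int b\<bar> \<and> \<bar>int a - int b\<bar> \<le> int p - int q"

definition pq_total_colouring ::
  "'v set \<Rightarrow> 'v set set \<Rightarrow> nat \<Rightarrow> nat \<Rightarrow> ('v \<Rightarrow> nat) \<Rightarrow> ('v set \<Rightarrow> nat) \<Rightarrow> bool" where
  "pq_total_colouring V E p q cv ce \<longleftrightarrow>
     (\<forall>v\<in>V. cv v < p) \<and> (\<forall>e\<in>E. ce e < p) \<and>
     (\<forall>u\<in>V. \<forall>v\<in>V. {u, v} \<in> E \<longrightarrow> col_ok p q (cv u) (cv v)) \<and>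
     (\<forall>e\<in>E. \<forall>e'\<in>E. e \<noteq> e' \<and> e \<inter> e' \<noteq> {} \<longrightarrow> col_ok p q (ce e) (ce e')) \<and>
     (\<forall>v\<in>V. \<forall>e\<in>E. v \<in> e \<longrightarrow> col_ok p q (cv v) (ce e))"

definition circ_total_chromatic :: "'v set \<Rightarrow> 'v set set \<Rightarrow> real" where
  "circ_total_chromatic V E =
     Inf {real p / real q | p q. 1 \<le> q \<and> q \<le> p \<and>
            (\<exists>cv ce. pq_total_colouring V E p q cv ce)}"

text \<open>Vertices of G_{k,n}: the vertex u of B_0; in block B_i (1 \<le> i \<le> n) the side
  A i j (j < k) of K_{k,k} that keeps all its vertices, and the side Bv i j (j < k-1)
  from which one vertex was deleted. The two surviving half-edges of B_i are at
  A i 0 (half-edge f'_i) and A i 1 (half-edge f_i).\<close>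
datatype gvert = U | A nat nat | Bv nat nat

definition G_V :: "nat \<Rightarrow> nat \<Rightarrow> gvert set" where
  "G_V k n = {U} \<union> {A i j | i j. 1 \<le> i \<and> i \<le> n \<and> j < k}
                 \<union> {Bv i j | i j. 1 \<le> i \<and> i \<le> n \<and> j < k - 1}"

definition G_E :: "nat \<Rightarrow> nat \<Rightarrow> gvert set set" where
  "G_E k n =
     {{A i j, Bv i l} | i j l. 1 \<le> i \<and> i \<le> n \<and> j < k \<and> l < k - 1}
     \<union> {{U, A 1 0}}
     \<union> {{A i 1, A (Suc i) 0} | i. 1 \<le> i \<and> i < n}
     \<union> {{A n 1, U}}"

end

theory Submission
  imports Defs
begin

text \<open>Encode the colour c q + s of the circle of length (k + 1) q + 1, q = 2 n, as the
  slot (c, s) with class c \<le> k and shift s \<le> q. Two slot colours are at circular distance at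
  least q when the classes differ by at least 2, or by exactly 1 and the shifts are ordered
  accordingly, or coincide and the shifts are 0 and q; classes 0 and k are close only across the
  one spare colour, so there the shifts may be out of order by 1. Block B_i is coloured like the
  classical (k + 1)-total colouring of K_{k,k}, the edge A_j B_l getting class j + l mod k and the
  B-side vertices class k, with all shifts in {2i - 2, 2i - 1}; the edge joining B_i to B_{i+1}
  gets class k and shift 2i. So the shift grows by 2 per block, and the cycle closes at u, whose
  two edges have class k and shifts 0 and 2n = q.\<close>

fun slot_colour :: "nat \<Rightarrow> nat \<times> nat \<Rightarrow> nat" where
  "slot_colour q (c, s) = c * q + s"

fun valid_slot :: "nat \<Rightarrow> nat \<Rightarrow> nat \<times> nat \<Rightarrow> bool" where
  "valid_slot k q (c, s) \<longleftrightarrow> c \<le> k \<and> s \<le> q"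

fun slot_compatible :: "nat \<Rightarrow> nat \<Rightarrow> nat \<times> nat \<Rightarrow> nat \<times> nat \<Rightarrow> bool" where
  "slot_compatible k q (c1, s1) (c2, s2) \<longleftrightarrow>
     (c1 = c2 \<longrightarrow> s1 = 0 \<and> s2 = q \<or> s1 = q \<and> s2 = 0) \<and>
     (c1 = Suc c2 \<longrightarrow> s2 \<le> s1) \<and> (c2 = Suc c1 \<longrightarrow> s1 \<le> s2) \<and>
     (c1 = c2 + k \<longrightarrow> s1 \<le> s2 + 1) \<and> (c2 = c1 + k \<longrightarrow> s2 \<le> s1 + 1)"

lemma slot_colour_less:
  assumes "valid_slot k q a"
  shows "slot_colour q a < (k + 1) * q + 1"
proof (cases a)
  case (Pair c s)
  with assms have "c * q + s \<le> k * q + q" by (auto intro: add_mono mult_le_mono1)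
  with Pair show ?thesis by simp
qed

lemma col_ok_slot_colour_ordered:
  assumes "1 \<le> k" "c2 < c1" "c1 \<le> k" "s1 \<le> q" "s2 \<le> q"
    "c1 = Suc c2 \<Longrightarrow> s2 \<le> s1" "c1 = c2 + k \<Longrightarrow> s1 \<le> s2 + 1"
  shows "col_ok ((k + 1) * q + 1) q (c1 * q + s1) (c2 * q + s2)"
proof -
  obtain d where d: "c1 = c2 + d" "1 \<le> d" "d \<le> k" using assms by (intro that[of "c1 - c2"]) auto
  have diff: "int (c1 * q + s1) - int (c2 * q + s2) = int d * int q + int s1 - int s2"
    using d by (simp add: algebra_simps)
  have "int q \<le> int d * int q + int s1 - int s2"
  proof (cases "d = 1")
    case False
    then have "2 * int q \<le> int d * int q" using d by (intro mult_right_mono) auto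
    with assms show ?thesis by linarith
  qed (use assms d in simp)
  moreover have "int d * int q + int s1 - int s2 \<le> int k * int q + 1"
  proof (cases "d = k")
    case False
    then have "(int d + 1) * int q \<le> int k * int q" using d by (intro mult_right_mono) auto
    with assms show ?thesis by (simp add: algebra_simps)
  qed (use assms d in simp)
  ultimately show ?thesis unfolding col_ok_def diff by (simp add: algebra_simps)
qed

lemma col_ok_commute: "col_ok p q a b \<longleftrightarrow> col_ok p q b a"
  unfolding col_ok_def by (simp add: abs_minus_commute)

lemma col_ok_slot_colour:
  assumes "1 \<le> k" "valid_slot k q a" "valid_slot k q b" "slot_compatible k q a b"
  shows "col_ok ((k + 1) * q + 1) q (slot_colour q a) (slot_colour q b)"
proof -
  obtain c1 s1 c2 s2 where ab: "a = (c1, s1)" "b = (c2, s2)" by fastforce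
  consider "c2 < c1" | "c1 < c2" | "c1 = c2" by linarith
  then show ?thesis
  proof cases
    case 1
    with assms show ?thesis unfolding ab slot_colour.simps
      by (intro col_ok_slot_colour_ordered) auto
  next
    case 2
    with assms show ?thesis unfolding ab slot_colour.simps col_ok_commute[of _ _ "c1 * q + s1"]
      by (intro col_ok_slot_colour_ordered) auto
  next
    case 3
    have "int q \<le> int k * int q" using assms(1) by (simp flip: of_nat_mult)
    with 3 assms ab show ?thesis unfolding col_ok_def by auto
  qed
qed

definition pair_fun :: "('v \<Rightarrow> 'v \<Rightarrow> 'a) \<Rightarrow> 'v set \<Rightarrow> 'a" where
  "pair_fun f e = (let u = SOME u. u \<in> e in f u (SOME v. v \<in> e - {u}))"

lemma pair_fun_doubleton:
  assumes "u \<noteq> v" "f u v = f v u"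
  shows "pair_fun f {u, v} = f u v"
proof -
  define x where "x = (SOME x. x \<in> {u, v})"
  define y where "y = (SOME y. y \<in> {u, v} - {x})"
  have x: "x \<in> {u, v}" unfolding x_def by (rule someI[of _ u]) simp
  with assms(1) have "\<exists>y. y \<in> {u, v} - {x}" by blast
  then have "y \<in> {u, v} - {x}" unfolding y_def by (rule someI_ex)
  with x have "x = u \<and> y = v \<or> x = v \<and> y = u" by blast
  moreover have "pair_fun f {u, v} = f x y" unfolding pair_fun_def Let_def x_def y_def ..
  ultimately show ?thesis using assms(2) by auto
qed

lemma pq_total_colouring_of_slots:
  fixes vs :: "'v \<Rightarrow> nat \<times> nat" and es :: "'v \<Rightarrow> 'v \<Rightarrow> nat \<times> nat"
  assumes "1 \<le> k"
    and edges: "\<And>e. e \<in> E \<Longrightarrow> card e = 2"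
    and es_commute: "\<And>u v. {u, v} \<in> E \<Longrightarrow> es u v = es v u"
    and vs_valid: "\<And>v. v \<in> V \<Longrightarrow> valid_slot k q (vs v)"
    and es_valid: "\<And>u v. {u, v} \<in> E \<Longrightarrow> valid_slot k q (es u v)"
    and vv: "\<And>u v. {u, v} \<in> E \<Longrightarrow> slot_compatible k q (vs u) (vs v)"
    and ve: "\<And>u v. {u, v} \<in> E \<Longrightarrow> slot_compatible k q (vs u) (es u v)"
    and ee: "\<And>u v w. {u, v} \<in> E \<Longrightarrow> {u, w} \<in> E \<Longrightarrow> v \<noteq> w \<Longrightarrow>
               slot_compatible k q (es u v) (es u w)"
  shows "pq_total_colouring V E ((k + 1) * q + 1) q
           (\<lambda>v. slot_colour q (vs v)) (\<lambda>e. slot_colour q (pair_fun es e))"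
proof -
  have pair_fun_edge: "pair_fun es {u, v} = es u v" if uv: "{u, v} \<in> E" for u v
  proof -
    have "u \<noteq> v" using edges[OF uv] by auto
    then show ?thesis using es_commute[OF uv] by (rule pair_fun_doubleton)
  qed
  have pair_fun_valid: "valid_slot k q (pair_fun es e)" if "e \<in> E" for e
    using edges[OF that] es_valid pair_fun_edge that by (auto simp: card_2_iff)
  have edge_at: "\<exists>v. e = {u, v} \<and> u \<noteq> v" if "e \<in> E" "u \<in> e" for u e
    using edges[OF that(1)] that(2) by (auto simp: card_2_iff insert_commute)
  show ?thesis unfolding pq_total_colouring_def
  proof (intro conjI ballI impI)
    fix v assume "v \<in> V"
    then show "slot_colour q (vs v) < (k + 1) * q + 1" by (intro slot_colour_less vs_valid)
  next
    fix e assume "e \<in> E"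
    then show "slot_colour q (pair_fun es e) < (k + 1) * q + 1" by (intro slot_colour_less pair_fun_valid)
  next
    fix u v assume "u \<in> V" "v \<in> V" "{u, v} \<in> E"
    then show "col_ok ((k + 1) * q + 1) q (slot_colour q (vs u)) (slot_colour q (vs v))"
      using assms(1) by (intro col_ok_slot_colour vs_valid vv)
  next
    fix v e assume "v \<in> V" "e \<in> E" "v \<in> e"
    then obtain w where vw: "e = {v, w}" using edge_at by blast
    with \<open>e \<in> E\<close> have "{v, w} \<in> E" by simp
    with \<open>v \<in> V\<close>
    show "col_ok ((k + 1) * q + 1) q (slot_colour q (vs v)) (slot_colour q (pair_fun es e))"
      unfolding vw pair_fun_edge[OF \<open>{v, w} \<in> E\<close>]
      using assms(1) by (intro col_ok_slot_colour vs_valid es_valid ve)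
  next
    fix e e' assume "e \<in> E" "e' \<in> E" "e \<noteq> e' \<and> e \<inter> e' \<noteq> {}"
    then obtain u where "u \<in> e" "u \<in> e'" "e \<noteq> e'" by blast
    obtain v where v: "e = {u, v}" using edge_at \<open>e \<in> E\<close> \<open>u \<in> e\<close> by blast
    obtain w where w: "e' = {u, w}" using edge_at \<open>e' \<in> E\<close> \<open>u \<in> e'\<close> by blast
    have "v \<noteq> w" using v w \<open>e \<noteq> e'\<close> by blast
    moreover have "{u, v} \<in> E" "{u, w} \<in> E" using v w \<open>e \<in> E\<close> \<open>e' \<in> E\<close> by simp_all
    ultimately show "col_ok ((k + 1) * q + 1) q
        (slot_colour q (pair_fun es e)) (slot_colour q (pair_fun es e'))"
      unfolding v w pair_fun_edge[OF \<open>{u, v} \<in> E\<close>] pair_fun_edge[OF \<open>{u, w} \<in> E\<close>]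
      using assms(1) by (intro col_ok_slot_colour es_valid ee)
  qed
qed

lemma circ_total_chromatic_le:
  assumes "pq_total_colouring V E p q cv ce" "1 \<le> q" "q \<le> p"
  shows "circ_total_chromatic V E \<le> real p / real q"
  unfolding circ_total_chromatic_def
proof (rule cInf_lower)
  show "real p / real q \<in> {real p / real q | p q. 1 \<le> q \<and> q \<le> p \<and>
          (\<exists>cv ce. pq_total_colouring V E p q cv ce)}"
    using assms by blast
qed (rule bdd_belowI[of _ 0], auto)

text \<open>The end vertices of the half-edges f_i and f'_i of the paper; the edge joining B_i to B_{i+1}
  is {f_vertex i, f'_vertex n (Suc i)} for i \<le> n, with B_0 = B_{n+1} = {u}.\<close>

definition f_vertex :: "nat \<Rightarrow> gvert" where
  "f_vertex i = (if i = 0 then U else A i 1)"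

definition f'_vertex :: "nat \<Rightarrow> nat \<Rightarrow> gvert" where
  "f'_vertex n i = (if i = Suc n then U else A i 0)"

lemma G_E_eq:
  assumes "1 \<le> n"
  shows "G_E k n = {{A i j, Bv i l} | i j l. 1 \<le> i \<and> i \<le> n \<and> j < k \<and> l < k - 1}
                   \<union> {{f_vertex i, f'_vertex n (Suc i)} | i. i \<le> n}"
proof -
  have "{{f_vertex i, f'_vertex n (Suc i)} | i. i \<le> n} =
        {{U, A 1 0}} \<union> {{A i 1, A (Suc i) 0} | i. 1 \<le> i \<and> i < n} \<union> {{A n 1, U}}"
  proof (intro equalityI subsetI)
    fix e assume "e \<in> {{f_vertex i, f'_vertex n (Suc i)} | i. i \<le> n}"
    then obtain i where "i \<le> n" "e = {f_vertex i, f'_vertex n (Suc i)}" by blast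
    with assms show "e \<in> {{U, A 1 0}} \<union> {{A i 1, A (Suc i) 0} | i. 1 \<le> i \<and> i < n} \<union> {{A n 1, U}}"
      by (cases "i = 0"; cases "i = n") (auto simp: f_vertex_def f'_vertex_def)
  next
    have "{U, A 1 0} = {f_vertex 0, f'_vertex n (Suc 0)}" "{A n 1, U} = {f_vertex n, f'_vertex n (Suc n)}"
      "\<And>i. 1 \<le> i \<Longrightarrow> i < n \<Longrightarrow> {A i 1, A (Suc i) 0} = {f_vertex i, f'_vertex n (Suc i)}"
      using assms by (auto simp: f_vertex_def f'_vertex_def)
    then show "e \<in> {{f_vertex i, f'_vertex n (Suc i)} | i. i \<le> n}"
      if "e \<in> {{U, A 1 0}} \<union> {{A i 1, A (Suc i) 0} | i. 1 \<le> i \<and> i < n} \<union> {{A n 1, U}}" for e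
      using that assms by fastforce
  qed
  then show ?thesis unfolding G_E_def by auto
qed

lemma card_G_E:
  assumes "e \<in> G_E k n"
  shows "card e = 2"
  using assms unfolding G_E_def by auto

lemma G_E_cases:
  assumes "{u, v} \<in> G_E k n" "1 \<le> n"
  obtains (block) i j l where "1 \<le> i" "i \<le> n" "j < k" "l < k - 1" "u = A i j" "v = Bv i l"
    | (block') i j l where "1 \<le> i" "i \<le> n" "j < k" "l < k - 1" "u = Bv i l" "v = A i j"
    | (link) i where "i \<le> n" "u = f_vertex i" "v = f'_vertex n (Suc i)"
    | (link') i where "i \<le> n" "u = f'_vertex n (Suc i)" "v = f_vertex i"
  using assms unfolding G_E_eq[OF assms(2)] by (auto simp: doubleton_eq_iff)

fun vertex_slot :: "nat \<Rightarrow> gvert \<Rightarrow> nat \<times> nat" where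
  "vertex_slot k U = (2, 0)"
| "vertex_slot k (A i j) =
     (if j = 0 then k - 1 else if j = 1 then 0 else j - 1, 2 * (i - 1) + (if j = 1 then 1 else 0))"
| "vertex_slot k (Bv i l) = (k, 2 * (i - 1) + 1)"

fun edge_slot :: "nat \<Rightarrow> gvert \<Rightarrow> gvert \<Rightarrow> nat \<times> nat" where
  "edge_slot k (A i j) (Bv _ l) =
     ((j + l) mod k, 2 * (i - 1) + (if 1 \<le> j \<and> j + l < k then 1 else 0))"
| "edge_slot k (Bv _ l) (A i j) =
     ((j + l) mod k, 2 * (i - 1) + (if 1 \<le> j \<and> j + l < k then 1 else 0))"
| "edge_slot k (A i (Suc 0)) _ = (k, 2 * i)"
| "edge_slot k _ (A i (Suc 0)) = (k, 2 * i)"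
| "edge_slot k _ _ = (k, 0)"

lemma add_mod_eq_if:
  fixes j l k :: nat
  assumes "j < k" "l < k"
  shows "(j + l) mod k = (if j + l < k then j + l else j + l - k)"
  using assms by (simp add: mod_if le_mod_geq)

lemma vertex_slot_valid:
  assumes "4 \<le> k" "v \<in> G_V k n"
  shows "valid_slot k (2 * n) (vertex_slot k v)"
  using assms unfolding G_V_def by auto

lemma edge_slot_valid:
  assumes "4 \<le> k" "1 \<le> n" "{u, v} \<in> G_E k n"
  shows "valid_slot k (2 * n) (edge_slot k u v)"
  using assms(3,2) by (cases rule: G_E_cases)
    (use assms(1) in \<open>auto simp: f_vertex_def f'_vertex_def\<close>)

lemma edge_slot_commute:
  assumes "1 \<le> n" "{u, v} \<in> G_E k n"
  shows "edge_slot k u v = edge_slot k v u"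
  using assms(2,1) by (cases rule: G_E_cases) (auto simp: f_vertex_def f'_vertex_def)

lemma vertex_slots_compatible:
  assumes "4 \<le> k" "1 \<le> n" "{u, v} \<in> G_E k n"
  shows "slot_compatible k (2 * n) (vertex_slot k u) (vertex_slot k v)"
  using assms(3,2) by (cases rule: G_E_cases)
    (use assms(1) in \<open>auto simp: f_vertex_def f'_vertex_def\<close>)

lemma vertex_edge_slots_compatible:
  assumes "4 \<le> k" "1 \<le> n" "{u, v} \<in> G_E k n"
  shows "slot_compatible k (2 * n) (vertex_slot k u) (edge_slot k u v)"
  using assms(3,2) by (cases rule: G_E_cases)
    (use assms(1) in \<open>auto simp: f_vertex_def f'_vertex_def add_mod_eq_if\<close>)

lemma edge_slots_compatible:
  assumes "4 \<le> k" "1 \<le> n" "{u, v} \<in> G_E k n" "{u, w} \<in> G_E k n" "v \<noteq> w"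
  shows "slot_compatible k (2 * n) (edge_slot k u v) (edge_slot k u w)"
  using assms(3,4) by (elim G_E_cases)
    (use assms(1,2,5) in \<open>auto simp: f_vertex_def f'_vertex_def add_mod_eq_if split: if_splits\<close>)

lemma G_total_colouring:
  assumes "4 \<le> k" "1 \<le> n"
  shows "pq_total_colouring (G_V k n) (G_E k n) ((k + 1) * (2 * n) + 1) (2 * n)
           (\<lambda>v. slot_colour (2 * n) (vertex_slot k v))
           (\<lambda>e. slot_colour (2 * n) (pair_fun (edge_slot k) e))"
proof (rule pq_total_colouring_of_slots)
  show "1 \<le> k" using assms(1) by simp
qed (use assms in \<open>auto intro: card_G_E edge_slot_commute vertex_slot_valid edge_slot_valid
      vertex_slots_compatible vertex_edge_slots_compatible edge_slots_compatible\<close>)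

theorem theorem8:
  fixes k n :: nat
  assumes "k \<ge> 4" and "n \<ge> 1"
  shows "circ_total_chromatic (G_V k n) (G_E k n) \<le> real k + 1 + 1 / (2 * real n)"
proof -
  have "circ_total_chromatic (G_V k n) (G_E k n) \<le> real ((k + 1) * (2 * n) + 1) / real (2 * n)"
    by (rule circ_total_chromatic_le[OF G_total_colouring[OF assms]]) (use assms(2) in auto)
  also have "\<dots> = real k + 1 + 1 / (2 * real n)"
    using assms(2) by (simp add: field_simps)
  finally show ?thesis .
qed

end
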